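(* For each integer $n\ge 2$ let $a_{1,n},\dots,a_{n,n}>0$ with $\sum_{i=1}^n a_{i,n}=n$, and suppose there exists $M\ge 1$ such that $a_{i,n}\le M$ for all $n\ge 2$ and all $i=1,\dots,n$. Let $\gamma$ be Euler's constant. Then for every $\varepsilon>0$ there exists $\delta>0$ such that for every $s\in(-\delta,\delta)\setminus\{0\}$ and every integer $n\ge 2$, $$(1-\varepsilon)e^{-\gamma}<\left(\prod_{i=1}^n\Gamma(1+a_{i,n}s)\right)^{1/(sn)}<(1+\varepsilon)e^{-\gamma}.$$
   Context: $\Gamma$ is the Gamma function. *)

theory Defs
  imports "HOL-Analysis.Analysis"
begin

end

theory Submission
  imports Defs
begin

text \<open>Since \<open>ln \<Gamma>(1 + h) = -\<gamma> h + o(h)\<close>, each factor contributes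
  \<open>ln \<Gamma>(1 + a\<^sub>i s) = a\<^sub>i s (-\<gamma> + e\<^sub>i)\<close> with \<open>|e\<^sub>i|\<close> small as soon as \<open>|a\<^sub>i s| \<le> M |s|\<close> is small.
  Dividing the logarithm of the product by \<open>s n = s \<Sum> a\<^sub>i\<close> gives \<open>-\<gamma>\<close> plus the
  \<open>a\<close>-weighted mean of the \<open>e\<^sub>i\<close>, which is small uniformly in \<open>n\<close>.\<close>

lemma ln_Gamma_one_plus_over_tendsto:
  "(\<lambda>h::real. ln_Gamma (1 + h) / h) \<midarrow>0\<rightarrow> - euler_mascheroni"
proof -
  have "(ln_Gamma has_field_derivative Digamma (1::real)) (at 1)"
    by (rule has_field_derivative_ln_Gamma_real) simp
  hence "(\<lambda>h. (ln_Gamma (1 + h) - ln_Gamma (1::real)) / h) \<midarrow>0\<rightarrow> Digamma (1::real)"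
    by (simp add: DERIV_def)
  moreover have "ln_Gamma (1::real) = 0"
    by (simp add: ln_Gamma_real_pos)
  ultimately show ?thesis
    by simp
qed

lemma ln_Gamma_one_plus_over_close:
  fixes \<eta> :: real
  assumes "\<eta> > 0"
  obtains \<rho> where "\<rho> > 0"
    and "\<And>h. h \<noteq> 0 \<Longrightarrow> \<bar>h\<bar> < \<rho> \<Longrightarrow>
           Gamma (1 + h) > 0 \<and> \<bar>ln (Gamma (1 + h)) / h + euler_mascheroni\<bar> < \<eta>"
proof -
  obtain \<rho>' where "\<rho>' > 0" and close: "\<And>h::real. h \<noteq> 0 \<and> norm (h - 0) < \<rho>' \<Longrightarrow>
      norm (ln_Gamma (1 + h) / h - - euler_mascheroni) < \<eta>"
    using LIM_D[OF ln_Gamma_one_plus_over_tendsto assms] by blast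
  show ?thesis
  proof (rule that[of "min \<rho>' 1"])
    show "min \<rho>' 1 > 0"
      using \<open>\<rho>' > 0\<close> by simp
    fix h :: real
    assume "h \<noteq> 0" "\<bar>h\<bar> < min \<rho>' 1"
    hence "1 + h > 0"
      by (auto simp: abs_less_iff)
    thus "Gamma (1 + h) > 0 \<and> \<bar>ln (Gamma (1 + h)) / h + euler_mascheroni\<bar> < \<eta>"
      using close[of h] \<open>h \<noteq> 0\<close> \<open>\<bar>h\<bar> < min \<rho>' 1\<close>
      by (simp add: ln_Gamma_real_pos[symmetric])
  qed
qed

lemma weighted_sum_abs_less:
  fixes w f :: "'a \<Rightarrow> real"
  assumes "finite I" "I \<noteq> {}"
    and "\<And>i. i \<in> I \<Longrightarrow> w i > 0" "\<And>i. i \<in> I \<Longrightarrow> \<bar>f i\<bar> < \<eta>"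
  shows "\<bar>\<Sum>i\<in>I. w i * f i\<bar> < \<eta> * (\<Sum>i\<in>I. w i)"
proof -
  have "\<bar>\<Sum>i\<in>I. w i * f i\<bar> \<le> (\<Sum>i\<in>I. \<bar>w i * f i\<bar>)"
    by (rule sum_abs)
  also have "\<dots> < (\<Sum>i\<in>I. w i * \<eta>)"
  proof (rule sum_strict_mono)
    fix i
    assume "i \<in> I"
    thus "\<bar>w i * f i\<bar> < w i * \<eta>"
      using assms(3,4)[OF \<open>i \<in> I\<close>] by (simp add: abs_mult mult_strict_left_mono)
  qed (use assms in auto)
  finally show ?thesis
    by (simp add: sum_distrib_left mult.commute)
qed

lemma ln_prod_Gamma_weighted_close:
  fixes w :: "'a \<Rightarrow> real" and s \<rho> \<eta> :: real
  assumes close: "\<And>h. h \<noteq> 0 \<Longrightarrow> \<bar>h\<bar> < \<rho> \<Longrightarrow>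
           Gamma (1 + h) > 0 \<and> \<bar>ln (Gamma (1 + h)) / h + euler_mascheroni\<bar> < \<eta>"
    and I: "finite I" "I \<noteq> {}"
    and w: "\<And>i. i \<in> I \<Longrightarrow> w i > 0" "\<And>i. i \<in> I \<Longrightarrow> \<bar>w i * s\<bar> < \<rho>"
    and "s \<noteq> 0"
  shows "(\<Prod>i\<in>I. Gamma (1 + w i * s)) > 0"
    and "\<bar>ln (\<Prod>i\<in>I. Gamma (1 + w i * s)) / (s * (\<Sum>i\<in>I. w i)) + euler_mascheroni\<bar> < \<eta>"
proof -
  define P where "P = (\<Prod>i\<in>I. Gamma (1 + w i * s))"
  define e where "e i = ln (Gamma (1 + w i * s)) / (w i * s) + euler_mascheroni" for i
  have nonzero: "w i * s \<noteq> 0" if "i \<in> I" for i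
    using w(1)[OF that] \<open>s \<noteq> 0\<close> by simp
  have Gamma_factor_pos: "Gamma (1 + w i * s) > 0" and e_small: "\<bar>e i\<bar> < \<eta>" if "i \<in> I" for i
    using close[OF nonzero[OF that] w(2)[OF that]] by (simp_all add: e_def)
  show "(\<Prod>i\<in>I. Gamma (1 + w i * s)) > 0"
    using Gamma_factor_pos by (intro prod_pos) auto
  define W where "W = (\<Sum>i\<in>I. w i)"
  have "W > 0"
    unfolding W_def using I w(1) by (intro sum_pos) auto
  have Gamma_nonzero: "Gamma (1 + w i * s) \<noteq> 0" if "i \<in> I" for i
    using Gamma_factor_pos[OF that] by simp
  have ln_Gamma_eq: "ln (Gamma (1 + w i * s)) = w i * s * (e i - euler_mascheroni)" if "i \<in> I" for i
    using nonzero[OF that] by (simp add: e_def)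
  have "ln P = (\<Sum>i\<in>I. ln (Gamma (1 + w i * s)))"
    unfolding P_def using I(1) Gamma_nonzero by (rule ln_prod)
  also have "\<dots> = (\<Sum>i\<in>I. w i * s * (e i - euler_mascheroni))"
    using ln_Gamma_eq by (rule sum.cong[OF refl])
  also have "\<dots> = s * ((\<Sum>i\<in>I. w i * e i) - euler_mascheroni * W)"
    by (simp add: W_def sum_subtractf sum_distrib_left sum_distrib_right algebra_simps)
  finally have "ln P / (s * W) + euler_mascheroni = (\<Sum>i\<in>I. w i * e i) / W"
    using \<open>s \<noteq> 0\<close> \<open>W > 0\<close> by (simp add: divide_simps)
  moreover have "\<bar>\<Sum>i\<in>I. w i * e i\<bar> < \<eta> * W"
    unfolding W_def using I w(1) e_small by (rule weighted_sum_abs_less)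
  ultimately have "\<bar>ln P / (s * W) + euler_mascheroni\<bar> < \<eta>"
    using \<open>W > 0\<close> by (simp add: abs_divide pos_divide_less_eq)
  thus "\<bar>ln (\<Prod>i\<in>I. Gamma (1 + w i * s)) / (s * (\<Sum>i\<in>I. w i)) + euler_mascheroni\<bar> < \<eta>"
    by (simp only: P_def W_def)
qed

lemma exp_bounds_of_abs_less_ln:
  fixes E \<epsilon> :: real
  assumes "\<epsilon> > 0" "\<bar>E\<bar> < ln (1 + \<epsilon>)"
  shows "1 - \<epsilon> < exp E" "exp E < 1 + \<epsilon>"
proof -
  have exp_ln: "exp (ln (1 + \<epsilon>)) = 1 + \<epsilon>"
    using assms(1) by simp
  show "exp E < 1 + \<epsilon>"
    using assms(2) exp_ln by (metis abs_less_iff exp_less_cancel_iff)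
  have "1 - \<epsilon> < 1 / (1 + \<epsilon>)"
    using assms(1) by (simp add: field_simps)
  also have "\<dots> = exp (- ln (1 + \<epsilon>))"
    using exp_ln by (simp add: exp_minus inverse_eq_divide)
  also have "\<dots> < exp E"
    using assms(2) by simp
  finally show "1 - \<epsilon> < exp E" .
qed

lemma powr_inverse_bounds_exp_neg_euler_mascheroni:
  fixes P t \<epsilon> :: real
  assumes "P > 0" "\<epsilon> > 0"
    and close: "\<bar>ln P / t + euler_mascheroni\<bar> < ln (1 + \<epsilon>)"
  shows "(1 - \<epsilon>) * exp (- euler_mascheroni) < P powr (1 / t)"
    and "P powr (1 / t) < (1 + \<epsilon>) * exp (- euler_mascheroni)"
proof -
  define E where "E = ln P / t + euler_mascheroni"
  have "P powr (1 / t) = exp E * exp (- euler_mascheroni)"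
    using \<open>P > 0\<close> by (simp add: E_def powr_def exp_add[symmetric])
  thus "(1 - \<epsilon>) * exp (- euler_mascheroni) < P powr (1 / t)"
    and "P powr (1 / t) < (1 + \<epsilon>) * exp (- euler_mascheroni)"
    using exp_bounds_of_abs_less_ln[OF \<open>\<epsilon> > 0\<close>, of E] close by (simp_all add: E_def)
qed

theorem mainTheorem8:
  fixes a :: "nat \<Rightarrow> nat \<Rightarrow> real" and M :: real
  assumes pos: "\<And>n i. n \<ge> 2 \<Longrightarrow> i \<in> {1..n} \<Longrightarrow> a i n > 0"
    and sum: "\<And>n. n \<ge> 2 \<Longrightarrow> (\<Sum>i=1..n. a i n) = real n"
    and M: "M \<ge> 1"
    and bound: "\<And>n i. n \<ge> 2 \<Longrightarrow> i \<in> {1..n} \<Longrightarrow> a i n \<le> M"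
  shows "\<forall>\<epsilon>>0. \<exists>\<delta>>0. \<forall>s. s \<in> {-\<delta><..<\<delta>} - {0} \<longrightarrow> (\<forall>n\<ge>2.
           (1 - \<epsilon>) * exp (- euler_mascheroni) <
             (\<Prod>i=1..n. Gamma (1 + a i n * s)) powr (1 / (s * real n)) \<and>
           (\<Prod>i=1..n. Gamma (1 + a i n * s)) powr (1 / (s * real n)) <
             (1 + \<epsilon>) * exp (- euler_mascheroni))"
proof (intro allI impI)
  fix \<epsilon> :: real
  assume "\<epsilon> > 0"
  obtain \<rho> where "\<rho> > 0" and close: "\<And>h. h \<noteq> 0 \<Longrightarrow> \<bar>h\<bar> < \<rho> \<Longrightarrow>
      Gamma (1 + h) > 0 \<and> \<bar>ln (Gamma (1 + h)) / h + euler_mascheroni\<bar> < ln (1 + \<epsilon>)"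
    using ln_Gamma_one_plus_over_close[of "ln (1 + \<epsilon>)"] \<open>\<epsilon> > 0\<close> by auto
  show "\<exists>\<delta>>0. \<forall>s. s \<in> {-\<delta><..<\<delta>} - {0} \<longrightarrow> (\<forall>n\<ge>2.
           (1 - \<epsilon>) * exp (- euler_mascheroni) <
             (\<Prod>i=1..n. Gamma (1 + a i n * s)) powr (1 / (s * real n)) \<and>
           (\<Prod>i=1..n. Gamma (1 + a i n * s)) powr (1 / (s * real n)) <
             (1 + \<epsilon>) * exp (- euler_mascheroni))"
  proof (intro exI[of _ "\<rho> / M"] conjI allI impI)
    show "\<rho> / M > 0"
      using \<open>\<rho> > 0\<close> M by simp
    fix s :: real and n :: nat
    assume s: "s \<in> {- (\<rho> / M)<..<\<rho> / M} - {0}" and n: "n \<ge> 2"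
    have "s \<noteq> 0" "\<bar>s\<bar> * M < \<rho>"
      using s M by (auto simp: field_simps abs_less_iff)
    have small: "\<bar>a i n * s\<bar> < \<rho>" if "i \<in> {1..n}" for i
    proof -
      have "\<bar>a i n * s\<bar> = a i n * \<bar>s\<bar>"
        using pos[OF n that] by (simp add: abs_mult)
      also have "\<dots> \<le> \<bar>s\<bar> * M"
        using bound[OF n that] by (simp add: mult_right_mono mult.commute[of "\<bar>s\<bar>"])
      finally have "\<bar>a i n * s\<bar> \<le> \<bar>s\<bar> * M" .
      thus ?thesis
        using \<open>\<bar>s\<bar> * M < \<rho>\<close> by linarith
    qed
    have I: "finite {1..n}" "{1..n} \<noteq> {}"
      using n by auto
    note mean_close = ln_prod_Gamma_weighted_close[where w = "\<lambda>i. a i n",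
        OF close I pos[OF n] small \<open>s \<noteq> 0\<close>]
    show "(1 - \<epsilon>) * exp (- euler_mascheroni) <
             (\<Prod>i=1..n. Gamma (1 + a i n * s)) powr (1 / (s * real n))"
      "(\<Prod>i=1..n. Gamma (1 + a i n * s)) powr (1 / (s * real n)) <
             (1 + \<epsilon>) * exp (- euler_mascheroni)"
      using powr_inverse_bounds_exp_neg_euler_mascheroni[OF mean_close(1) \<open>\<epsilon> > 0\<close>]
        mean_close(2) unfolding sum[OF n] by blast+
  qed
qed

end
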